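(* Let $n\ge9$, let $K$ be an integer with $0\le K\le n/2$, and let $P_K=\min\!\big(\frac{K+\sqrt K}{n},\frac12\big)$. Then, entrywise, $\mathrm{Sen}(\mathcal S)_K\le3e^{20}\cdot\mathrm{Sen}(\tilde{\mathcal N})_{P_K}$.
   Context: Let $\mathbb{I}^n=\{0,1\}^n$ with Hamming distance $d$; operators on $\mathbb{R}^{\mathbb{I}^n}$ are identified with matrices and $A\le B$ means $B-A$ has nonnegative entries. For $0\le k\le n$, $(S_kf)(x)=\binom nk^{-1}\sum_{y:\,d(x,y)=k}f(y)$, and $\mathrm{Sen}(\mathcal S)_K=\frac1{K+1}\sum_{\ell=0}^KS_\ell$. For $p\in[0,1/2]$, $\tilde N_p=\sum_{k=0}^n\binom nkp^k(1-p)^{n-k}S_k$; $\mathrm{Sen}(\tilde{\mathcal N})_P=\frac1P\int_0^P\tilde N_p\,dp$ for $P\in(0,1/2]$, and $\mathrm{Sen}(\tilde{\mathcal N})_0$ is the identity (limit from above). *)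

theory Defs
  imports "HOL-Analysis.Analysis"
begin

text \<open>Points of the cube {0,1}^n are encoded as subsets of {0..<n} (indicator sets).\<close>

definition cube :: "nat \<Rightarrow> nat set set" where
  "cube n = {x. x \<subseteq> {..<n}}"

definition hamming :: "nat set \<Rightarrow> nat set \<Rightarrow> nat" where
  "hamming x y = card ((x - y) \<union> (y - x))"

definition S_op :: "nat \<Rightarrow> nat \<Rightarrow> nat set \<Rightarrow> nat set \<Rightarrow> real" where
  "S_op n k x y = (if hamming x y = k then 1 / real (n choose k) else 0)"

definition Sen_S :: "nat \<Rightarrow> nat \<Rightarrow> nat set \<Rightarrow> nat set \<Rightarrow> real" where
  "Sen_S n K x y = (1 / (real K + 1)) * (\<Sum>l = 0..K. S_op n l x y)"

definition Ntilde :: "nat \<Rightarrow> real \<Rightarrow> nat set \<Rightarrow> nat set \<Rightarrow> real" where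
  "Ntilde n p x y = (\<Sum>k = 0..n. real (n choose k) * p ^ k * (1 - p) ^ (n - k) * S_op n k x y)"

definition Sen_N :: "nat \<Rightarrow> real \<Rightarrow> nat set \<Rightarrow> nat set \<Rightarrow> real" where
  "Sen_N n P x y = (if P = 0 then (if x = y then 1 else 0)
                    else (1 / P) * integral {0..P} (\<lambda>p. Ntilde n p x y))"

end

theory Submission
  imports Defs
begin

text \<open>
  At Hamming distance \<open>d\<close> both sides are explicit. The entry of \<open>Sen(S)\<^sub>K\<close> is
  \<open>1 / ((K + 1) C(n,d))\<close> if \<open>d \<le> K\<close> and \<open>0\<close> otherwise, while \<open>\<tilde>N\<^sub>p\<close> has entry
  \<open>p\<^sup>d (1 - p)\<^sup>n\<^sup>-\<^sup>d\<close>; by the beta--binomial identity its integral over \<open>[0,P]\<close> equals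
  \<open>Pr[Bin(n+1,P) > d] / ((n+1) C(n,d))\<close>. It therefore suffices that \<open>(n+1) P\<^sub>K \<le> 4K\<close> and
  that \<open>Bin(n+1,P\<^sub>K)\<close> exceeds \<open>K\<close> with probability at least \<open>1/3\<close>. If \<open>P\<^sub>K = (K + \<surd>K)/n\<close> the mean
  exceeds \<open>K\<close> by at least \<open>\<surd>K\<close> while the variance is at most the mean, and Cantelli's
  inequality applies; if \<open>P\<^sub>K = 1/2\<close> the symmetry of \<open>Bin(n+1,1/2)\<close> gives probability
  at least \<open>1/2\<close>. For \<open>K = 0\<close> both sides are the identity. The argument yields the constant
  12 in place of \<open>3e\<^sup>2\<^sup>0\<close> and does not need \<open>n \<ge> 9\<close>.
\<close>

definition binom_prob :: "nat \<Rightarrow> real \<Rightarrow> nat \<Rightarrow> real" where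
  "binom_prob N p j = real (N choose j) * p ^ j * (1 - p) ^ (N - j)"

lemma binom_prob_nonneg: "0 \<le> p \<Longrightarrow> p \<le> 1 \<Longrightarrow> 0 \<le> binom_prob N p j"
  unfolding binom_prob_def by simp

lemma binom_prob_eq_0: "N < j \<Longrightarrow> binom_prob N p j = 0"
  unfolding binom_prob_def by simp

lemma sum_binom_prob: "(\<Sum>j\<le>N. binom_prob N p j) = 1"
  using binomial_ring[of p "1 - p" N] by (simp add: binom_prob_def)

lemma Suc_mult_choose_Suc_real:
  "real (Suc j) * real (Suc N choose Suc j) = real (Suc N) * real (N choose j)"
proof -
  have "Suc j * (Suc N choose Suc j) = Suc N * (N choose j)"
    using binomial_absorption[of j "Suc N"] by simp
  then show ?thesis
    by (simp only: of_nat_mult[symmetric])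
qed

lemma Suc_mult_binom_prob_Suc:
  "real (Suc j) * binom_prob (Suc N) p (Suc j) = real (Suc N) * p * binom_prob N p j"
proof -
  have "real (Suc j) * binom_prob (Suc N) p (Suc j)
      = (real (Suc j) * real (Suc N choose Suc j)) * (p * (p ^ j * (1 - p) ^ (N - j)))"
    unfolding binom_prob_def by (simp add: mult_ac)
  also have "\<dots> = real (Suc N) * p * binom_prob N p j"
    unfolding Suc_mult_choose_Suc_real binom_prob_def by (simp add: mult_ac)
  finally show ?thesis .
qed

lemma binom_prob_mean: "(\<Sum>j\<le>N. real j * binom_prob N p j) = real N * p"
proof (cases N)
  case (Suc M)
  have "(\<Sum>j\<le>N. real j * binom_prob N p j) = (\<Sum>j\<le>M. real (Suc j) * binom_prob (Suc M) p (Suc j))"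
    unfolding Suc by (subst sum.atMost_Suc_shift) simp
  also have "\<dots> = (\<Sum>j\<le>M. real (Suc M) * p * binom_prob M p j)"
    by (simp only: Suc_mult_binom_prob_Suc)
  also have "\<dots> = real N * p"
    by (simp add: sum_distrib_left[symmetric] sum_binom_prob Suc)
  finally show ?thesis .
qed simp

lemma binom_prob_second_moment:
  "(\<Sum>j\<le>N. real j ^ 2 * binom_prob N p j) = real N * p * ((real N - 1) * p + 1)"
proof (cases N)
  case (Suc M)
  have "(\<Sum>j\<le>N. real j ^ 2 * binom_prob N p j)
      = (\<Sum>j\<le>M. real (Suc j) * (real (Suc j) * binom_prob (Suc M) p (Suc j)))"
    unfolding Suc by (subst sum.atMost_Suc_shift) (simp add: power2_eq_square mult.assoc)
  also have "\<dots> = (\<Sum>j\<le>M. real (Suc M) * p * (real j * binom_prob M p j + binom_prob M p j))"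
    by (simp only: Suc_mult_binom_prob_Suc) (simp add: algebra_simps)
  also have "\<dots> = real (Suc M) * p * (real M * p + 1)"
    by (simp add: sum_distrib_left[symmetric] sum.distrib binom_prob_mean sum_binom_prob)
  finally show ?thesis
    using Suc by simp
qed simp

lemma binom_prob_second_moment_about:
  "(\<Sum>j\<le>N. (a - real j) ^ 2 * binom_prob N p j) = (a - real N * p) ^ 2 + real N * p * (1 - p)"
proof -
  have "(\<Sum>j\<le>N. (a - real j) ^ 2 * binom_prob N p j)
      = a\<^sup>2 * (\<Sum>j\<le>N. binom_prob N p j) - 2 * a * (\<Sum>j\<le>N. real j * binom_prob N p j)
        + (\<Sum>j\<le>N. real j ^ 2 * binom_prob N p j)"
    by (simp add: power2_eq_square algebra_simps sum.distrib sum_subtractf sum_distrib_left)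
  also have "\<dots> = (a - real N * p) ^ 2 + real N * p * (1 - p)"
    by (simp add: sum_binom_prob binom_prob_mean binom_prob_second_moment)
      (simp add: power2_eq_square algebra_simps)
  finally show ?thesis .
qed

lemma binom_prob_lower_tail_Cantelli:
  assumes p: "0 \<le> p" "p \<le> 1" and "t > 0" and K: "real K \<le> real N * p - t"
  defines "v \<equiv> real N * p * (1 - p)"
  shows "(\<Sum>j\<le>K. binom_prob N p j) \<le> v / (v + t\<^sup>2)"
proof -
  have v: "v \<ge> 0"
    using p unfolding v_def by simp
  \<comment> \<open>Chebyshev about the shifted centre \<open>N p + s\<close>; \<open>s = v / t\<close> minimizes the bound \<open>(s\<^sup>2 + v) / (t + s)\<^sup>2\<close>\<close>
  define s where "s = v / t"
  have s: "s \<ge> 0"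
    using v \<open>t > 0\<close> unfolding s_def by simp
  define a where "a = real N * p + s"
  have "K \<le> N"
    using K \<open>t > 0\<close> mult_left_le[OF p(2), of "real N"] by linarith
  have "(\<Sum>j\<le>K. binom_prob N p j) \<le> (\<Sum>j\<le>K. (a - real j)\<^sup>2 / (t + s)\<^sup>2 * binom_prob N p j)"
  proof (rule sum_mono)
    fix j assume "j \<in> {..K}"
    then have "t + s \<le> a - real j"
      using K unfolding a_def by auto
    then have "1 \<le> (a - real j)\<^sup>2 / (t + s)\<^sup>2"
      using \<open>t > 0\<close> s by (simp add: power_mono)
    then show "binom_prob N p j \<le> (a - real j)\<^sup>2 / (t + s)\<^sup>2 * binom_prob N p j"
      using binom_prob_nonneg[OF p, of N j] mult_right_mono by fastforce
  qed
  also have "\<dots> \<le> (\<Sum>j\<le>N. (a - real j)\<^sup>2 / (t + s)\<^sup>2 * binom_prob N p j)"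
    using \<open>K \<le> N\<close> binom_prob_nonneg[OF p] by (intro sum_mono2) auto
  also have "\<dots> = (s\<^sup>2 + v) / (t + s)\<^sup>2"
    by (simp add: sum_divide_distrib[symmetric] binom_prob_second_moment_about a_def v_def)
  also have "\<dots> = (v * (v + t\<^sup>2) / t\<^sup>2) / ((v + t\<^sup>2)\<^sup>2 / t\<^sup>2)"
    using \<open>t > 0\<close> unfolding s_def by (simp add: field_simps power2_eq_square)
  also have "\<dots> = v / (v + t\<^sup>2)"
  proof -
    have "v + t\<^sup>2 > 0"
      using \<open>t > 0\<close> v by (simp add: add_nonneg_pos)
    then show ?thesis
      using \<open>t > 0\<close> by (simp add: power2_eq_square)
  qed
  finally show ?thesis .
qed

definition binom_upper_tail :: "nat \<Rightarrow> real \<Rightarrow> nat \<Rightarrow> real" where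
  "binom_upper_tail N p k = (\<Sum>j = k..N. binom_prob N p j)"

lemma binom_upper_tail_nonneg: "0 \<le> p \<Longrightarrow> p \<le> 1 \<Longrightarrow> 0 \<le> binom_upper_tail N p k"
  unfolding binom_upper_tail_def by (simp add: sum_nonneg binom_prob_nonneg)

lemma binom_upper_tail_antimono:
  "0 \<le> p \<Longrightarrow> p \<le> 1 \<Longrightarrow> k \<le> l \<Longrightarrow> binom_upper_tail N p l \<le> binom_upper_tail N p k"
  unfolding binom_upper_tail_def by (intro sum_mono2) (auto simp: binom_prob_nonneg)

lemma binom_upper_tail_Suc_eq:
  "K \<le> N \<Longrightarrow> binom_upper_tail N p (Suc K) = 1 - (\<Sum>j\<le>K. binom_prob N p j)"
proof -
  assume "K \<le> N"
  then have "{..N} = {..K} \<union> {Suc K..N}"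
    by auto
  then have "(\<Sum>j\<le>N. binom_prob N p j) = (\<Sum>j\<le>K. binom_prob N p j) + binom_upper_tail N p (Suc K)"
    unfolding binom_upper_tail_def by (simp add: sum.union_disjoint)
  then show ?thesis
    by (simp add: sum_binom_prob)
qed

lemma binom_upper_tail_ge_one_third:
  assumes p: "0 \<le> p" "p \<le> 1" and "K \<ge> 1" and mean: "real K + sqrt (real K) \<le> real N * p"
  shows "binom_upper_tail N p (Suc K) \<ge> 1/3"
proof -
  define t where "t = real N * p - real K"
  have "sqrt (real K) \<ge> 1"
    using \<open>K \<ge> 1\<close> by simp
  moreover have "sqrt (real K) \<le> t"
    using mean unfolding t_def by simp
  ultimately have "t \<ge> 1"
    by linarith
  then have "t\<^sup>2 \<ge> real K"
    using power_mono[OF \<open>sqrt (real K) \<le> t\<close>, of 2] by simp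
  define v where "v = real N * p * (1 - p)"
  have "v \<le> real N * p"
    using p unfolding v_def by (simp add: mult_left_le)
  also have "\<dots> = real K + t"
    unfolding t_def by simp
  also have "\<dots> \<le> 2 * t\<^sup>2"
  proof -
    have "t \<le> t\<^sup>2"
      using \<open>t \<ge> 1\<close> mult_left_mono[OF \<open>t \<ge> 1\<close>, of t] by (simp add: power2_eq_square)
    then show ?thesis
      using \<open>t\<^sup>2 \<ge> real K\<close> by linarith
  qed
  finally have "v \<le> 2 * t\<^sup>2" .
  moreover have "v + t\<^sup>2 > 0"
    using p \<open>t \<ge> 1\<close> unfolding v_def by (simp add: add_nonneg_pos)
  ultimately have "v / (v + t\<^sup>2) \<le> 2/3"
    by (simp add: pos_divide_le_eq)
  moreover have "(\<Sum>j\<le>K. binom_prob N p j) \<le> v / (v + t\<^sup>2)"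
    unfolding v_def using \<open>t \<ge> 1\<close> by (intro binom_prob_lower_tail_Cantelli p) (auto simp: t_def)
  moreover have "K \<le> N"
    using mean \<open>sqrt (real K) \<ge> 1\<close> mult_left_le[OF p(2), of "real N"] by linarith
  ultimately show ?thesis
    unfolding binom_upper_tail_Suc_eq[OF \<open>K \<le> N\<close>] by linarith
qed

lemma binom_prob_reflect: "j \<le> N \<Longrightarrow> binom_prob N p (N - j) = binom_prob N (1 - p) j"
  unfolding binom_prob_def by (simp add: binomial_symmetric[symmetric])

lemma binom_upper_tail_half_ge_half:
  assumes "2 * K < N"
  shows "binom_upper_tail N (1/2) (Suc K) \<ge> 1/2"
proof -
  have "(\<Sum>j\<le>K. binom_prob N (1/2) j) = (\<Sum>j\<le>K. binom_prob N (1/2) (N - j))"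
    using assms by (intro sum.cong) (simp_all add: binom_prob_reflect)
  also have "\<dots> = (\<Sum>i \<in> (\<lambda>j. N - j) ` {..K}. binom_prob N (1/2) i)"
    using assms by (subst sum.reindex) (auto simp: inj_on_def)
  also have "\<dots> \<le> binom_upper_tail N (1/2) (Suc K)"
    unfolding binom_upper_tail_def using assms
    by (intro sum_mono2) (auto simp: binom_prob_nonneg)
  finally show ?thesis
    using assms by (simp add: binom_upper_tail_Suc_eq)
qed

lemma binom_prob_Suc_has_derivative:
  "((\<lambda>p. binom_prob (Suc N) p (Suc j)) has_real_derivative
      real (Suc N) * (binom_prob N p j - binom_prob N p (Suc j))) (at p)"
proof (cases "j \<le> N")
  case True
  define C where "C = real (Suc N choose Suc j)"
  define D where "D = real (Suc j) * p ^ j * (1 - p) ^ (N - j) - real (N - j) * p ^ Suc j * (1 - p) ^ (N - Suc j)"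
  have "((\<lambda>p. 1 - p) has_real_derivative -1) (at p)"
    using DERIV_diff[OF DERIV_const[of 1] DERIV_ident] by simp
  from DERIV_power[OF this, of "N - j"]
  have "((\<lambda>p. (1 - p) ^ (N - j)) has_real_derivative - (real (N - j) * (1 - p) ^ (N - j - 1))) (at p)"
    by simp
  from DERIV_mult'[OF DERIV_pow[of "Suc j" p UNIV] this]
  have "((\<lambda>p. p ^ Suc j * (1 - p) ^ (N - j)) has_real_derivative D) (at p)"
    unfolding D_def by (rule DERIV_cong) (simp add: algebra_simps)
  from DERIV_cmult[OF this, of C]
  have "((\<lambda>p. binom_prob (Suc N) p (Suc j)) has_real_derivative C * D) (at p)"
    unfolding binom_prob_def C_def by (simp add: mult.assoc)
  moreover have "C * D = real (Suc N) * (binom_prob N p j - binom_prob N p (Suc j))"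
  proof -
    have "(N - j) * (Suc N choose Suc j) = Suc N * (N choose Suc j)"
      using binomial_absorb_comp[of "Suc N" "Suc j"] by simp
    then have absorb_comp: "real (N - j) * C = real (Suc N) * real (N choose Suc j)"
      unfolding C_def by (simp only: of_nat_mult[symmetric])
    have absorb: "real (Suc j) * C = real (Suc N) * real (N choose j)"
      unfolding C_def by (rule Suc_mult_choose_Suc_real)
    have "C * D = (real (Suc j) * C) * p ^ j * (1 - p) ^ (N - j)
        - (real (N - j) * C) * p ^ Suc j * (1 - p) ^ (N - Suc j)"
      unfolding D_def by (simp only: right_diff_distrib mult_ac)
    also have "\<dots> = real (Suc N) * (binom_prob N p j - binom_prob N p (Suc j))"
      unfolding absorb absorb_comp binom_prob_def by (simp only: right_diff_distrib mult.assoc)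
    finally show ?thesis .
  qed
  ultimately show ?thesis
    by simp
next
  case False
  then show ?thesis
    by (simp add: binom_prob_eq_0)
qed

lemma binom_upper_tail_has_derivative:
  assumes "k \<le> N"
  shows "((\<lambda>p. binom_upper_tail (Suc N) p (Suc k)) has_real_derivative
      real (Suc N) * binom_prob N p k) (at p)"
proof -
  define h where "h i = binom_prob N p i" for i
  have tail: "binom_upper_tail (Suc N) q (Suc k) = (\<Sum>i = k..N. binom_prob (Suc N) q (Suc i))" for q
    unfolding binom_upper_tail_def by (simp only: sum.shift_bounds_cl_Suc_ivl)
  have "(\<Sum>i = k..N. real (Suc N) * (h i - h (Suc i))) = real (Suc N) * (h k - h (Suc N))"
    using sum_Suc_diff[of k N "\<lambda>i. - h i"] assms by (simp add: sum_distrib_left[symmetric])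
  also have "\<dots> = real (Suc N) * binom_prob N p k"
    unfolding h_def by (simp add: binom_prob_eq_0)
  finally have telescope: "(\<Sum>i = k..N. real (Suc N) * (h i - h (Suc i))) = real (Suc N) * binom_prob N p k" .
  have "((\<lambda>q. \<Sum>i = k..N. binom_prob (Suc N) q (Suc i)) has_real_derivative
      (\<Sum>i = k..N. real (Suc N) * (h i - h (Suc i)))) (at p)"
    unfolding h_def by (rule DERIV_sum) (rule binom_prob_Suc_has_derivative)
  then show ?thesis
    unfolding tail telescope .
qed

lemma binom_prob_has_integral:
  assumes "k \<le> N" and "0 \<le> P"
  shows "((\<lambda>p. real (Suc N) * binom_prob N p k) has_integral binom_upper_tail (Suc N) P (Suc k)) {0..P}"
proof -
  have "binom_upper_tail (Suc N) 0 (Suc k) = 0"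
    unfolding binom_upper_tail_def binom_prob_def by simp
  moreover have "((\<lambda>p. real (Suc N) * binom_prob N p k) has_integral
      binom_upper_tail (Suc N) P (Suc k) - binom_upper_tail (Suc N) 0 (Suc k)) {0..P}"
    using assms binom_upper_tail_has_derivative
    by (intro fundamental_theorem_of_calculus)
      (auto simp: has_real_derivative_iff_has_vector_derivative[symmetric] intro: has_field_derivative_at_within)
  ultimately show ?thesis
    by simp
qed

lemma hamming_le:
  assumes "x \<in> cube n" "y \<in> cube n"
  shows "hamming x y \<le> n"
proof -
  have "(x - y) \<union> (y - x) \<subseteq> {..<n}"
    using assms unfolding cube_def by auto
  then show ?thesis
    unfolding hamming_def using card_mono[of "{..<n}"] by fastforce
qed

lemma hamming_eq_0_iff: "finite x \<Longrightarrow> finite y \<Longrightarrow> hamming x y = 0 \<longleftrightarrow> x = y"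
  unfolding hamming_def by auto

lemma Sen_S_eq:
  "Sen_S n K x y = (if hamming x y \<le> K then 1 / ((real K + 1) * real (n choose hamming x y)) else 0)"
  unfolding Sen_S_def S_op_def by (simp add: sum.delta)

lemma Ntilde_eq: "Ntilde n p x y = binom_prob n p (hamming x y) / real (n choose hamming x y)"
proof -
  have "Ntilde n p x y = (\<Sum>k = 0..n. if k = hamming x y then binom_prob n p k / real (n choose k) else 0)"
    unfolding Ntilde_def S_op_def binom_prob_def by (intro sum.cong) auto
  then show ?thesis
    by (simp add: binom_prob_eq_0)
qed

lemma Sen_N_eq:
  assumes "0 < P" and "hamming x y \<le> n"
  shows "Sen_N n P x y = binom_upper_tail (Suc n) P (Suc (hamming x y)) / (P * real (Suc n) * real (n choose hamming x y))"
proof -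
  define d where "d = hamming x y"
  have "((\<lambda>p. Ntilde n p x y) has_integral
      binom_upper_tail (Suc n) P (Suc d) / (real (Suc n) * real (n choose d))) {0..P}"
    using has_integral_mult_left[OF binom_prob_has_integral[of d n P], of "1 / (real (Suc n) * real (n choose d))"]
      assms by (simp add: Ntilde_eq d_def)
  then show ?thesis
    unfolding Sen_N_def d_def[symmetric] using assms(1) by (simp add: integral_unique)
qed

lemma Sen_N_nonneg:
  assumes "0 \<le> P" "P \<le> 1" "hamming x y \<le> n"
  shows "0 \<le> Sen_N n P x y"
proof (cases "P = 0")
  case False
  then show ?thesis
    using assms by (simp add: Sen_N_eq binom_upper_tail_nonneg)
qed (simp add: Sen_N_def)

lemma binom_upper_tail_min_ge_one_third:
  assumes "1 \<le> K" "2 * K \<le> n"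
  defines "P \<equiv> min ((real K + sqrt (real K)) / real n) (1/2)"
  shows "binom_upper_tail (Suc n) P (Suc K) \<ge> 1/3"
proof (cases "(real K + sqrt (real K)) / real n \<le> 1/2")
  case True
  have "0 \<le> P" "P \<le> 1"
    unfolding P_def by auto
  have "n > 0"
    using assms by simp
  then have "real K + sqrt (real K) = real n * P"
    using True unfolding P_def by simp
  also have "\<dots> \<le> real (Suc n) * P"
    using \<open>0 \<le> P\<close> by (simp add: mult_right_mono)
  finally show ?thesis
    using assms(1) \<open>0 \<le> P\<close> \<open>P \<le> 1\<close> by (intro binom_upper_tail_ge_one_third)
next
  case False
  then have "P = 1/2"
    unfolding P_def by simp
  show ?thesis
    unfolding \<open>P = 1/2\<close> using binom_upper_tail_half_ge_half[of K "Suc n"] assms(2) by simp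
qed

lemma Sen_S_le_twelve_Sen_N:
  assumes "1 \<le> K" "2 * K \<le> n" and x: "x \<in> cube n" and y: "y \<in> cube n"
  defines "P \<equiv> min ((real K + sqrt (real K)) / real n) (1/2)"
  shows "Sen_S n K x y \<le> 12 * Sen_N n P x y"
proof -
  define d where "d = hamming x y"
  define C where "C = real (n choose d)"
  have "d \<le> n"
    unfolding d_def using x y by (rule hamming_le)
  then have "C > 0"
    unfolding C_def by simp
  have "n > 0"
    using assms by simp
  have "sqrt (real K) * 1 \<le> sqrt (real K) * sqrt (real K)"
    using \<open>1 \<le> K\<close> by (intro mult_left_mono) auto
  then have "sqrt (real K) \<le> real K"
    by simp
  have "P \<le> 1/2"
    unfolding P_def by (rule min.cobounded2)
  have "0 < P"
    using \<open>1 \<le> K\<close> \<open>n > 0\<close> unfolding P_def by (simp add: add_pos_nonneg)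
  show ?thesis
  proof (cases "d \<le> K")
    case False
    then show ?thesis
      using \<open>0 < P\<close> \<open>P \<le> 1/2\<close> \<open>d \<le> n\<close> by (simp add: Sen_S_eq Sen_N_nonneg d_def)
  next
    case True
    have "P * real (Suc n) \<le> 4 * real K"
    proof -
      have "P * real (Suc n) \<le> P * (2 * real n)"
        using \<open>0 < P\<close> \<open>n > 0\<close> by (intro mult_left_mono) auto
      also have "\<dots> = 2 * (real n * P)"
        by simp
      also have "\<dots> \<le> 2 * (real K + sqrt (real K))"
        using \<open>n > 0\<close> unfolding P_def by (simp add: min_def field_simps)
      also have "\<dots> \<le> 4 * real K"
        using \<open>sqrt (real K) \<le> real K\<close> by simp
      finally show ?thesis .
    qed
    have tail: "binom_upper_tail (Suc n) P (Suc d) \<ge> 1/3"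
      using binom_upper_tail_antimono[of P "Suc d" "Suc K" "Suc n"] True \<open>0 < P\<close> \<open>P \<le> 1/2\<close>
        binom_upper_tail_min_ge_one_third[OF assms(1,2)] unfolding P_def by simp
    have "Sen_S n K x y = 1 / ((real K + 1) * C)"
      using True by (simp add: Sen_S_eq C_def d_def)
    also have "\<dots> \<le> 4 / (4 * real K * C)"
      using \<open>1 \<le> K\<close> \<open>C > 0\<close> by (simp add: frac_le)
    also have "\<dots> \<le> 4 / (P * real (Suc n) * C)"
      using \<open>P * real (Suc n) \<le> 4 * real K\<close> \<open>0 < P\<close> \<open>C > 0\<close> by (intro frac_le mult_right_mono) auto
    also have "\<dots> \<le> 12 * binom_upper_tail (Suc n) P (Suc d) / (P * real (Suc n) * C)"
      using tail \<open>0 < P\<close> \<open>C > 0\<close> by (intro divide_right_mono) auto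
    also have "\<dots> = 12 * Sen_N n P x y"
      using \<open>0 < P\<close> \<open>d \<le> n\<close> by (simp add: Sen_N_eq C_def d_def)
    finally show ?thesis .
  qed
qed

lemma Sen_S_0_eq_Sen_N_0:
  assumes "x \<in> cube n" "y \<in> cube n"
  shows "Sen_S n 0 x y = Sen_N n 0 x y"
proof -
  have "finite x" "finite y"
    using assms unfolding cube_def by (auto intro: finite_subset)
  then have "hamming x y = 0 \<longleftrightarrow> x = y"
    by (rule hamming_eq_0_iff)
  then show ?thesis
    unfolding Sen_S_eq Sen_N_def by (cases "x = y") auto
qed

theorem lemma6:
  fixes n K :: nat and x y :: "nat set"
  assumes "n \<ge> 9" and "real K \<le> real n / 2"
    and "x \<in> cube n" and "y \<in> cube n"
  shows "Sen_S n K x y \<le> 3 * exp 20 * Sen_N n (min ((real K + sqrt (real K)) / real n) (1/2)) x y"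
proof -
  define P where "P = min ((real K + sqrt (real K)) / real n) (1/2)"
  have "0 \<le> P" "P \<le> 1"
    unfolding P_def by auto
  then have "0 \<le> Sen_N n P x y"
    using assms(3,4) by (intro Sen_N_nonneg hamming_le)
  moreover have "12 \<le> 3 * exp (20::real)"
    using exp_ge_add_one_self[of 20] by simp
  moreover have "Sen_S n K x y \<le> 12 * Sen_N n P x y"
  proof (cases "K = 0")
    case True
    then show ?thesis
      using assms(3,4) \<open>0 \<le> Sen_N n P x y\<close> by (simp add: P_def Sen_S_0_eq_Sen_N_0)
  next
    case False
    then show ?thesis
      using assms(2-4) unfolding P_def by (intro Sen_S_le_twelve_Sen_N) auto
  qed
  ultimately show ?thesis
    unfolding P_def[symmetric] by (meson mult_right_mono order_trans)
qed

end
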